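(* Let $q\ge 2$ and $\mathbf{u}=(u_2,\dots,u_q)$ be formal variables. Let $G_{n_1,n_2}(\mathbf{u})$ be the generating polynomial of $\mathcal{G}_{n_1,n_2}$ in which $u_j$ marks components of size $j$, i.e. $G_{n_1,n_2}(\mathbf{u})=\sum_{G\in\mathcal{G}_{n_1,n_2}}\prod_{j=2}^q u_j^{c_j(G)}$ where $c_j(G)$ is the number of connected components of $G$ with exactly $j$ vertices. Then $G_{n_1,n_2}(\mathbf{u})=0$ when $n_1$ is odd, and when $n_1$ is even, \[ G_{n_1,n_2}(\mathbf{u})=v_{n_1,n_2}\,[z^{n_2}]\,e^{\operatorname{Cycle}(z,\mathbf{u})}\operatorname{Path}(z,\mathbf{u})^{n_1/2}, \] where \[ v_{n_1,n_2}=\frac{(n_1+n_2)!}{2^{n_1/2}(n_1/2)!},\qquad \operatorname{Path}(z,\mathbf{u})=\frac{1}{1-z}+\sum_{j=2}^q(u_j-1)z^{j-2}, \] \[ \operatorname{Cycle}(z,\mathbf{u})=\frac12\log\frac{1}{1-z}-\frac z2-\frac{z^2}{4}+\sum_{j=3}^q(u_j-1)\frac{z^j}{2j}, \] and $[z^{n_2}]$ denotes extraction of the coefficient of $z^{n_2}$ in the formal power series in $z$.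
   Context: $\mathcal{G}_{n_1,n_2}$ denotes the set of labelled simple graphs (vertex set $\{1,\dots,n_1+n_2\}$) in which every vertex has degree $1$ or $2$, with exactly $n_1$ vertices of degree $1$ and $n_2$ vertices of degree $2$. *)

theory Defs
  imports "HOL-Computational_Algebra.Formal_Power_Series"
begin

definition simple_graph :: "nat \<Rightarrow> nat set set \<Rightarrow> bool" where
  "simple_graph n E \<longleftrightarrow> (\<forall>e\<in>E. e \<subseteq> {1..n} \<and> card e = 2)"

definition degree :: "nat set set \<Rightarrow> nat \<Rightarrow> nat" where
  "degree E v = card {e\<in>E. v \<in> e}"

definition graphs12 :: "nat \<Rightarrow> nat \<Rightarrow> nat set set set" where
  "graphs12 n1 n2 = {E. simple_graph (n1 + n2) E
      \<and> (\<forall>v\<in>{1..n1+n2}. degree E v = 1 \<or> degree E v = 2)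
      \<and> card {v\<in>{1..n1+n2}. degree E v = 1} = n1}"

definition adjacent :: "nat set set \<Rightarrow> nat \<Rightarrow> nat \<Rightarrow> bool" where
  "adjacent E v w \<longleftrightarrow> {v, w} \<in> E"

definition component :: "nat \<Rightarrow> nat set set \<Rightarrow> nat \<Rightarrow> nat set" where
  "component n E v = {w\<in>{1..n}. (adjacent E)\<^sup>*\<^sup>* v w}"

definition components :: "nat \<Rightarrow> nat set set \<Rightarrow> nat set set" where
  "components n E = component n E ` {1..n}"

definition comp_count :: "nat \<Rightarrow> nat set set \<Rightarrow> nat \<Rightarrow> nat" where
  "comp_count n E j = card {C\<in>components n E. card C = j}"

definition genpoly :: "nat \<Rightarrow> (nat \<Rightarrow> 'a::comm_ring_1) \<Rightarrow> nat \<Rightarrow> nat \<Rightarrow> 'a" where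
  "genpoly q u n1 n2 =
     (\<Sum>E\<in>graphs12 n1 n2. \<Prod>j\<in>{2..q}. u j ^ comp_count (n1 + n2) E j)"

definition Path_fps :: "nat \<Rightarrow> (nat \<Rightarrow> 'a::field_char_0) \<Rightarrow> 'a fps" where
  "Path_fps q u = inverse (1 - fps_X)
      + (\<Sum>j\<in>{2..q}. fps_const (u j - 1) * fps_X ^ (j - 2))"

text \<open>log(1/(1-z)) = - log(1 - z), with log(1+x) = fps_ln 1.\<close>

definition log_inv_one_minus :: "'a::field_char_0 fps" where
  "log_inv_one_minus = - (fps_ln 1 oo (- fps_X))"

definition Cycle_fps :: "nat \<Rightarrow> (nat \<Rightarrow> 'a::field_char_0) \<Rightarrow> 'a fps" where
  "Cycle_fps q u = fps_const (1/2) * log_inv_one_minus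
      - fps_const (1/2) * fps_X - fps_const (1/4) * fps_X ^ 2
      + (\<Sum>j\<in>{3..q}. fps_const ((u j - 1) / (2 * of_nat j)) * fps_X ^ j)"

end

theory Submission
  imports Defs
begin

text \<open>Fix the set D of vertices of degree 1 and consider the weighted sum over all graphs on V
  with leaf set D, a component of size j having weight u_j. Deleting the edge at a leaf r either
  splits off a path component {r,x}, when x is a leaf, or makes its neighbour x a leaf of a smaller
  graph, which then carries the vertices of the path removed so far. In a graph without leaves,
  deleting one of the two edges at a fixed vertex v leaves a graph whose two leaves v and x are
  connected, so no component changes. This gives recurrences in |D| and |V - D| that determine
  the weighted sum. The coefficient formula satisfies the same recurrences, the cycle recurrence
  because H = exp(Cycle) solves H' = H Cycle'. Finally there are binomial(n1 + n2, n1) leaf sets.\<close>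

section \<open>Reachability and connected components\<close>

lemma symp_adjacent: "symp (adjacent E)"
  by (rule sympI) (simp add: adjacent_def insert_commute)

lemma reach_sym: "(adjacent E)\<^sup>*\<^sup>* a b \<Longrightarrow> (adjacent E)\<^sup>*\<^sup>* b a"
  by (rule sympD[OF symp_rtranclp[OF symp_adjacent]])

lemma reach_mono: "E \<subseteq> E' \<Longrightarrow> (adjacent E)\<^sup>*\<^sup>* a b \<Longrightarrow> (adjacent E')\<^sup>*\<^sup>* a b"
  by (erule rtranclp_mono[THEN predicate2D, rotated]) (auto simp: adjacent_def)

lemma reach_isolated: "x \<notin> \<Union>E \<Longrightarrow> (adjacent E)\<^sup>*\<^sup>* x b \<longleftrightarrow> b = x"
proof
  assume x: "x \<notin> \<Union>E" and "(adjacent E)\<^sup>*\<^sup>* x b"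
  from this(2) show "b = x"
    by (rule converse_rtranclpE) (use x in \<open>auto simp: adjacent_def\<close>)
qed simp

text \<open>A new vertex r attached to x behaves like x as far as reachability is concerned.\<close>

lemma reach_insert_pendant:
  assumes r: "r \<notin> \<Union>E" and xr: "x \<noteq> r"
  shows "(adjacent (insert {r,x} E))\<^sup>*\<^sup>* a b
     \<longleftrightarrow> a = b \<or> (adjacent E)\<^sup>*\<^sup>* (if a = r then x else a) (if b = r then x else b)"
proof -
  define \<sigma> where "\<sigma> c = (if c = r then x else c)" for c
  let ?new = "(adjacent (insert {r,x} E))\<^sup>*\<^sup>*" and ?old = "(adjacent E)\<^sup>*\<^sup>*"
  have "a = b \<or> ?old (\<sigma> a) (\<sigma> b)" if "?new a b"
    using that
  proof (induction rule: rtranclp_induct)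
    case (step y z)
    from step.hyps(2) have "{y,z} = {r,x} \<or> {y,z} \<in> E"
      by (auto simp: adjacent_def)
    then show ?case
    proof
      assume "{y,z} = {r,x}"
      then have "\<sigma> y = x" "\<sigma> z = x"
        by (auto simp: \<sigma>_def doubleton_eq_iff)
      then show ?thesis using step.IH by (auto simp: \<sigma>_def)
    next
      assume "{y,z} \<in> E"
      then have "\<sigma> y = y" "\<sigma> z = z" "adjacent E y z"
        using r by (auto simp: adjacent_def \<sigma>_def)
      then show ?thesis using step.IH by (metis rtranclp.simps)
    qed
  qed simp
  moreover have "?new a b" if "a = b \<or> ?old (\<sigma> a) (\<sigma> b)"
  proof -
    have to_\<sigma>: "?new c (\<sigma> c)" for c
      by (auto simp: adjacent_def \<sigma>_def)
    show ?thesis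
      using that reach_mono[of E "insert {r,x} E" "\<sigma> a" "\<sigma> b"] to_\<sigma>[of a] to_\<sigma>[of b]
      by (auto intro: rtranclp_trans reach_sym)
  qed
  ultimately show ?thesis unfolding \<sigma>_def by blast
qed

lemma reach_insert_connected_edge:
  assumes "(adjacent E)\<^sup>*\<^sup>* v x"
  shows "(adjacent (insert {v,x} E))\<^sup>*\<^sup>* = (adjacent E)\<^sup>*\<^sup>*"
proof (intro ext iffI)
  fix a b assume "(adjacent (insert {v,x} E))\<^sup>*\<^sup>* a b"
  then show "(adjacent E)\<^sup>*\<^sup>* a b"
  proof (induction rule: rtranclp_induct)
    case (step y z)
    then have "(adjacent E)\<^sup>*\<^sup>* y z"
      using assms reach_sym by (auto simp: adjacent_def doubleton_eq_iff)
    then show ?case using step.IH by (rule rtranclp_trans[rotated])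
  qed simp
qed (rule reach_mono[of E], auto)

definition components_on :: "nat set \<Rightarrow> nat set set \<Rightarrow> nat set set" where
  "components_on V E = (\<lambda>v. {w\<in>V. (adjacent E)\<^sup>*\<^sup>* v w}) ` V"

lemma components_on_subset: "C \<in> components_on V E \<Longrightarrow> C \<subseteq> V"
  by (auto simp: components_on_def)

definition attach :: "nat \<Rightarrow> nat \<Rightarrow> nat set \<Rightarrow> nat set" where
  "attach r x C = (if x \<in> C then insert r C else C)"

lemma inj_on_attach: "r \<notin> V \<Longrightarrow> inj_on (attach r x) (Pow V)"
  by (auto simp: inj_on_def attach_def split: if_splits)

lemma components_on_insert_pendant:
  assumes r: "r \<notin> \<Union>E" "r \<in> V" and x: "x \<noteq> r" "x \<in> V"
  shows "components_on V (insert {r,x} E) = attach r x ` components_on (V - {r}) E"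
proof -
  define \<sigma> where "\<sigma> c = (if c = r then x else c)" for c
  have comp: "{w\<in>V. (adjacent (insert {r,x} E))\<^sup>*\<^sup>* v w}
      = attach r x {w\<in>V - {r}. (adjacent E)\<^sup>*\<^sup>* (\<sigma> v) w}" if "v \<in> V" for v
  proof (rule set_eqI)
    fix w
    show "w \<in> {w\<in>V. (adjacent (insert {r,x} E))\<^sup>*\<^sup>* v w}
      \<longleftrightarrow> w \<in> attach r x {w\<in>V - {r}. (adjacent E)\<^sup>*\<^sup>* (\<sigma> v) w}"
      using reach_insert_pendant[OF r(1) x(1), of v w] that r(2) x
      by (cases "w = r") (auto simp: attach_def \<sigma>_def)
  qed
  have "\<sigma> ` V = V - {r}"
  proof
    show "\<sigma> ` V \<subseteq> V - {r}" using x by (auto simp: \<sigma>_def)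
    show "V - {r} \<subseteq> \<sigma> ` V"
    proof
      fix w assume w: "w \<in> V - {r}"
      then have "\<sigma> w = w" by (simp add: \<sigma>_def)
      with w show "w \<in> \<sigma> ` V" by (metis DiffD1 imageI)
    qed
  qed
  then have "components_on V (insert {r,x} E)
      = attach r x ` (\<lambda>v. {w\<in>V - {r}. (adjacent E)\<^sup>*\<^sup>* v w}) ` (\<sigma> ` V)"
    unfolding components_on_def image_image using comp by (intro image_cong) auto
  then show ?thesis
    unfolding components_on_def \<open>\<sigma> ` V = V - {r}\<close> .
qed

lemma components_on_isolated:
  assumes x: "x \<notin> \<Union>E" "x \<in> V"
  shows "components_on V E = insert {x} (components_on (V - {x}) E)"
proof -
  let ?C = "\<lambda>V v. {w\<in>V. (adjacent E)\<^sup>*\<^sup>* v w}"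
  have other: "?C V v = ?C (V - {x}) v" if "v \<noteq> x" for v
  proof -
    have "\<not> (adjacent E)\<^sup>*\<^sup>* v x"
      using that reach_isolated[OF x(1), of v] reach_sym[of E v x] by blast
    then show ?thesis by auto
  qed
  have "components_on V E = ?C V ` insert x (V - {x})"
    unfolding components_on_def using x(2) by (simp add: insert_absorb)
  also have "\<dots> = insert {x} (?C V ` (V - {x}))"
    using reach_isolated[OF x(1)] x(2) by auto
  also have "?C V ` (V - {x}) = components_on (V - {x}) E"
    unfolding components_on_def using other by (intro image_cong) auto
  finally show ?thesis .
qed

definition comp_weight :: "(nat set \<Rightarrow> 'a::comm_monoid_mult) \<Rightarrow> nat set \<Rightarrow> nat set set \<Rightarrow> 'a" where
  "comp_weight f V E = (\<Prod>C\<in>components_on V E. f C)"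

lemma comp_weight_cong:
  "(\<And>C. C \<subseteq> V \<Longrightarrow> f C = g C) \<Longrightarrow> comp_weight f V E = comp_weight g V E"
  unfolding comp_weight_def by (rule prod.cong) (auto dest: components_on_subset)

lemma comp_weight_insert_pendant:
  assumes "r \<notin> \<Union>E" "r \<in> V" "x \<noteq> r" "x \<in> V"
  shows "comp_weight f V (insert {r,x} E) = comp_weight (f \<circ> attach r x) (V - {r}) E"
proof -
  have "inj_on (attach r x) (components_on (V - {r}) E)"
    by (rule inj_on_subset[OF inj_on_attach[of r "V - {r}"]]) (auto dest: components_on_subset)
  then show ?thesis
    unfolding comp_weight_def components_on_insert_pendant[OF assms] by (rule prod.reindex)
qed

lemma comp_weight_isolated:
  assumes "finite V" "x \<notin> \<Union>E" "x \<in> V"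
  shows "comp_weight f V E = f {x} * comp_weight f (V - {x}) E"
proof -
  have "{x} \<notin> components_on (V - {x}) E"
    using components_on_subset by blast
  moreover have "finite (components_on (V - {x}) E)"
    using assms(1) by (simp add: components_on_def)
  ultimately show ?thesis
    unfolding comp_weight_def components_on_isolated[OF assms(2,3)] by simp
qed

lemma comp_weight_insert_connected_edge:
  "(adjacent E)\<^sup>*\<^sup>* v x \<Longrightarrow> comp_weight f V (insert {v,x} E) = comp_weight f V E"
  by (simp add: comp_weight_def components_on_def reach_insert_connected_edge)

section \<open>Graphs with prescribed degrees\<close>

definition degree_graphs :: "nat set \<Rightarrow> (nat \<Rightarrow> nat) \<Rightarrow> nat set set set" where
  "degree_graphs V \<delta> = {E. (\<forall>e\<in>E. e \<subseteq> V \<and> card e = 2) \<and> (\<forall>v\<in>V. degree E v = \<delta> v)}"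

lemma degree_graphs_subset_Pow: "degree_graphs V \<delta> \<subseteq> Pow (Pow V)"
  by (auto simp: degree_graphs_def)

lemma finite_degree_graphs: "finite V \<Longrightarrow> finite (degree_graphs V \<delta>)"
  by (rule finite_subset[OF degree_graphs_subset_Pow]) simp

lemma finite_edges: "finite V \<Longrightarrow> E \<in> degree_graphs V \<delta> \<Longrightarrow> finite E"
  using degree_graphs_subset_Pow[of V \<delta>] by (auto intro: finite_subset[of E "Pow V"])

lemma vertex_notin_degree_graph: "E \<in> degree_graphs V \<delta> \<Longrightarrow> r \<notin> V \<Longrightarrow> r \<notin> \<Union>E"
  by (auto simp: degree_graphs_def)

lemma degree_insert:
  "finite E \<Longrightarrow> e \<notin> E \<Longrightarrow> degree (insert e E) v = degree E v + (if v \<in> e then 1 else 0)"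
proof -
  assume "finite E" "e \<notin> E"
  moreover have "{e'\<in>insert e E. v \<in> e'} = (if v \<in> e then insert e {e'\<in>E. v \<in> e'} else {e'\<in>E. v \<in> e'})"
    by auto
  ultimately show ?thesis
    by (simp add: degree_def)
qed

lemma degree_eq_0_iff: "finite E \<Longrightarrow> degree E v = 0 \<longleftrightarrow> v \<notin> \<Union>E"
  by (auto simp: degree_def)

lemma degree_graphs_cong:
  "(\<And>v. v \<in> V \<Longrightarrow> \<delta> v = \<delta>' v) \<Longrightarrow> degree_graphs V \<delta> = degree_graphs V \<delta>'"
  by (simp add: degree_graphs_def)

lemma degree_graphs_remove_isolated:
  assumes "finite V" "\<delta> r = 0"
  shows "degree_graphs V \<delta> = degree_graphs (V - {r}) \<delta>"
proof (intro set_eqI iffI)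
  fix E assume E: "E \<in> degree_graphs V \<delta>"
  then have "r \<notin> \<Union>E"
    using assms degree_eq_0_iff[OF finite_edges[OF assms(1) E]]
    by (cases "r \<in> V") (auto simp: degree_graphs_def)
  with E show "E \<in> degree_graphs (V - {r}) \<delta>"
    by (auto simp: degree_graphs_def)
next
  fix E assume E: "E \<in> degree_graphs (V - {r}) \<delta>"
  then have "degree E r = 0"
    using assms(1) degree_eq_0_iff finite_edges vertex_notin_degree_graph
    by (metis Diff_iff finite_Diff insertI1)
  with E assms(2) show "E \<in> degree_graphs V \<delta>"
    by (auto simp: degree_graphs_def)
qed

lemma degree_graphs_edge:
  assumes V: "finite V" "a \<in> V" "b \<in> V" and ab: "a \<noteq> b" and \<delta>: "1 \<le> \<delta> a" "1 \<le> \<delta> b"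
  shows "{E \<in> degree_graphs V \<delta>. {a,b} \<in> E}
       = insert {a,b} ` {E \<in> degree_graphs V (\<delta>(a := \<delta> a - 1, b := \<delta> b - 1)). {a,b} \<notin> E}"
proof -
  define \<delta>' where "\<delta>' = \<delta>(a := \<delta> a - 1, b := \<delta> b - 1)"
  have \<delta>_split: "\<delta> v = \<delta>' v + (if v \<in> {a,b} then 1 else 0)" for v
    using ab \<delta> by (auto simp: \<delta>'_def)
  have key: "insert {a,b} E \<in> degree_graphs V \<delta> \<longleftrightarrow> E \<in> degree_graphs V \<delta>'"
    if "finite E" "{a,b} \<notin> E" for E
    using V ab by (simp add: degree_graphs_def degree_insert[OF that] \<delta>_split)
  show ?thesis
    unfolding \<delta>'_def[symmetric]
  proof (intro set_eqI iffI)
    fix E assume E: "E \<in> {E \<in> degree_graphs V \<delta>. {a,b} \<in> E}"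
    then have "E = insert {a,b} (E - {{a,b}})" "finite (E - {{a,b}})"
      using finite_edges[OF V(1)] by auto
    with E key[of "E - {{a,b}}"] show "E \<in> insert {a,b} ` {E \<in> degree_graphs V \<delta>'. {a,b} \<notin> E}"
      by (metis (no_types, lifting) Diff_iff image_eqI insertI1 mem_Collect_eq)
  next
    fix E assume "E \<in> insert {a,b} ` {E \<in> degree_graphs V \<delta>'. {a,b} \<notin> E}"
    then show "E \<in> {E \<in> degree_graphs V \<delta>. {a,b} \<in> E}"
      using key finite_edges[OF V(1)] by blast
  qed
qed

definition leaf_graphs :: "nat set \<Rightarrow> nat set \<Rightarrow> nat set set set" where
  "leaf_graphs V D = degree_graphs V (\<lambda>v. if v \<in> D then 1 else 2)"

lemma leaf_graphs_edge_between_leaves: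
  assumes V: "finite V" "D \<subseteq> V" and r: "r \<in> D" and x: "x \<in> D" "x \<noteq> r"
  shows "{E \<in> leaf_graphs V D. {r,x} \<in> E} = insert {r,x} ` leaf_graphs (V - {r,x}) (D - {r,x})"
proof -
  let ?\<delta> = "\<lambda>v. if v \<in> D then 1 else 2 :: nat"
  let ?\<delta>' = "?\<delta>(r := 0, x := 0)"
  have "degree_graphs V ?\<delta>' = degree_graphs (V - {r}) ?\<delta>'"
    using V(1) by (rule degree_graphs_remove_isolated) simp
  also have "\<dots> = degree_graphs (V - {r} - {x}) ?\<delta>'"
    using V(1) by (intro degree_graphs_remove_isolated) simp_all
  also have "\<dots> = leaf_graphs (V - {r,x}) (D - {r,x})"
    unfolding leaf_graphs_def Diff_insert2[of V r "{x}"] by (rule degree_graphs_cong) auto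
  finally have "degree_graphs V ?\<delta>' = leaf_graphs (V - {r,x}) (D - {r,x})" .
  moreover have "{r,x} \<notin> E" if "E \<in> leaf_graphs (V - {r,x}) (D - {r,x})" for E
    using vertex_notin_degree_graph[of E "V - {r,x}" _ r] that unfolding leaf_graphs_def by blast
  ultimately show ?thesis
    using degree_graphs_edge[of V r x ?\<delta>] V r x unfolding leaf_graphs_def
    by (simp add: subset_iff) blast
qed

lemma leaf_graphs_edge_to_inner:
  assumes V: "finite V" "D \<subseteq> V" and r: "r \<in> D" and x: "x \<in> V - D"
  shows "{E \<in> leaf_graphs V D. {r,x} \<in> E} = insert {r,x} ` leaf_graphs (V - {r}) (insert x (D - {r}))"
proof -
  let ?\<delta> = "\<lambda>v. if v \<in> D then 1 else 2 :: nat"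
  let ?\<delta>' = "?\<delta>(r := 0, x := 1)"
  have "degree_graphs V ?\<delta>' = degree_graphs (V - {r}) ?\<delta>'"
    using V(1) x r by (intro degree_graphs_remove_isolated) auto
  also have "\<dots> = leaf_graphs (V - {r}) (insert x (D - {r}))"
    unfolding leaf_graphs_def by (rule degree_graphs_cong) auto
  finally have "degree_graphs V ?\<delta>' = leaf_graphs (V - {r}) (insert x (D - {r}))" .
  moreover have "{r,x} \<notin> E" if "E \<in> leaf_graphs (V - {r}) (insert x (D - {r}))" for E
    using vertex_notin_degree_graph[of E "V - {r}" _ r] that unfolding leaf_graphs_def by blast
  moreover have "r \<noteq> x"
    using r x by blast
  ultimately show ?thesis
    using degree_graphs_edge[of V r x ?\<delta>] V r x unfolding leaf_graphs_def
    by (simp add: subset_iff) blast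
qed

lemma cycle_graphs_edge:
  assumes V: "finite V" "v \<in> V" "x \<in> V" and xv: "x \<noteq> v"
  shows "{E \<in> leaf_graphs V {}. {v,x} \<in> E} = insert {v,x} ` {E \<in> leaf_graphs V {v,x}. {v,x} \<notin> E}"
proof -
  have "degree_graphs V ((\<lambda>_. 2)(v := 1, x := 1)) = leaf_graphs V {v,x}"
    unfolding leaf_graphs_def by (rule degree_graphs_cong) auto
  then show ?thesis
    using degree_graphs_edge[of V v x "\<lambda>_. 2"] V xv unfolding leaf_graphs_def
    by (simp add: eq_commute[of x v])
qed

lemma card_neighbours:
  assumes E: "E \<in> degree_graphs V \<delta>" and v: "v \<in> V"
  shows "card {x \<in> V - {v}. {v,x} \<in> E} = \<delta> v"
proof -
  have "{e \<in> E. v \<in> e} = (\<lambda>x. {v,x}) ` {x \<in> V - {v}. {v,x} \<in> E}"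
  proof (intro set_eqI iffI)
    fix e assume e: "e \<in> {e \<in> E. v \<in> e}"
    then have "e \<subseteq> V" "card e = 2"
      using E by (auto simp: degree_graphs_def)
    then obtain y where "e = {v,y}" "y \<noteq> v" "y \<in> V"
      using e by (auto simp: card_2_iff doubleton_eq_iff)
    with e show "e \<in> (\<lambda>x. {v,x}) ` {x \<in> V - {v}. {v,x} \<in> E}"
      by blast
  qed auto
  moreover have "inj_on (\<lambda>x. {v,x}) {x \<in> V - {v}. {v,x} \<in> E}"
    by (rule inj_onI) (auto simp: doubleton_eq_iff)
  ultimately have "card {x \<in> V - {v}. {v,x} \<in> E} = degree E v"
    by (simp add: degree_def card_image)
  then show ?thesis
    using E v by (simp add: degree_graphs_def)
qed

lemma sum_over_edges_at:
  fixes w :: "nat set set \<Rightarrow> 'a::comm_semiring_1"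
  assumes V: "finite V" "v \<in> V"
  shows "(\<Sum>x\<in>V - {v}. \<Sum>E \<in> {E \<in> degree_graphs V \<delta>. {v,x} \<in> E}. w E)
       = of_nat (\<delta> v) * (\<Sum>E \<in> degree_graphs V \<delta>. w E)"
proof -
  have "(\<Sum>x\<in>V - {v}. \<Sum>E \<in> {E \<in> degree_graphs V \<delta>. {v,x} \<in> E}. w E)
      = (\<Sum>E \<in> degree_graphs V \<delta>. \<Sum>x \<in> {x \<in> V - {v}. {v,x} \<in> E}. w E)"
    using V(1) finite_degree_graphs[OF V(1)] by (subst sum.swap_restrict) simp_all
  also have "\<dots> = (\<Sum>E \<in> degree_graphs V \<delta>. of_nat (\<delta> v) * w E)"
    using card_neighbours[OF _ V(2)] by (intro sum.cong) simp_all
  finally show ?thesis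
    by (simp add: sum_distrib_left)
qed

lemma leaf_graphs_two_leaves_connected:
  assumes "finite V" "v \<in> V" "x \<in> V" "x \<noteq> v" "E \<in> leaf_graphs V {v,x}"
  shows "(adjacent E)\<^sup>*\<^sup>* v x"
  using assms
proof (induction "card V" arbitrary: V v E rule: less_induct)
  case less
  have "card {y \<in> V - {v}. {v,y} \<in> E} = 1"
    using card_neighbours[of E V _ v] less.prems by (simp add: leaf_graphs_def)
  then obtain y where y: "y \<in> V - {v}" "{v,y} \<in> E"
    by (metis (no_types, lifting) card_1_singletonE mem_Collect_eq singletonI)
  show ?case
  proof (cases "y = x")
    case True
    with y show ?thesis by (simp add: adjacent_def r_into_rtranclp)
  next
    case False
    then have "y \<in> V - {v,x}"
      using y by blast
    then have "E \<in> insert {v,y} ` leaf_graphs (V - {v}) {y,x}"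
      using leaf_graphs_edge_to_inner[of V "{v,x}" v y] less.prems y
      by (auto simp: insert_commute[of y x])
    then obtain E' where E: "E = insert {v,y} E'" and E': "E' \<in> leaf_graphs (V - {v}) {y,x}"
      by blast
    have "(adjacent E')\<^sup>*\<^sup>* y x"
      using less.hyps[of "V - {v}" y E'] less.prems y False E' card_Diff1_less[of V v] by simp
    then have "(adjacent E)\<^sup>*\<^sup>* y x"
      unfolding E by (rule reach_mono[rotated]) blast
    moreover have "adjacent E v y"
      using y by (simp add: adjacent_def)
    ultimately show ?thesis
      by (rule converse_rtranclp_into_rtranclp[rotated])
  qed
qed

section \<open>Weighted sums over the graphs with a given set of leaves\<close>

lemma sum_image_insert:
  assumes "\<And>A. A \<in> S \<Longrightarrow> a \<notin> A"
  shows "(\<Sum>E \<in> insert a ` S. g E) = (\<Sum>E \<in> S. g (insert a E))"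
proof -
  have "inj_on (insert a) S"
    using assms by (intro inj_onI) (metis Diff_insert_absorb)
  then show ?thesis
    by (simp add: sum.reindex)
qed

lemma sum_leaf_edge_between_leaves:
  fixes f :: "nat set \<Rightarrow> 'a::comm_semiring_1"
  assumes V: "finite V" "D \<subseteq> V" and r: "r \<in> D" and x: "x \<in> D" "x \<noteq> r"
  shows "(\<Sum>E \<in> {E \<in> leaf_graphs V D. {r,x} \<in> E}. comp_weight f V E)
       = f {r,x} * (\<Sum>E \<in> leaf_graphs (V - {r,x}) (D - {r,x}). comp_weight f (V - {r,x}) E)"
proof -
  have weight: "comp_weight f V (insert {r,x} E) = f {r,x} * comp_weight f (V - {r,x}) E"
    if E: "E \<in> leaf_graphs (V - {r,x}) (D - {r,x})" for E
  proof -
    have iso: "r \<notin> \<Union>E" "x \<notin> \<Union>E"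
      using E vertex_notin_degree_graph unfolding leaf_graphs_def by blast+
    have "comp_weight f V (insert {r,x} E) = comp_weight (f \<circ> attach r x) (V - {r}) E"
      using iso V r x by (intro comp_weight_insert_pendant) auto
    also have "\<dots> = f {r,x} * comp_weight (f \<circ> attach r x) (V - {r} - {x}) E"
      using iso V r x by (subst comp_weight_isolated[of _ x]) (auto simp: attach_def insert_commute)
    also have "comp_weight (f \<circ> attach r x) (V - {r} - {x}) E = comp_weight f (V - {r,x}) E"
      unfolding Diff_insert2[symmetric] by (rule comp_weight_cong) (auto simp: attach_def)
    finally show ?thesis .
  qed
  have "{r,x} \<notin> E" if "E \<in> leaf_graphs (V - {r,x}) (D - {r,x})" for E
    using that vertex_notin_degree_graph unfolding leaf_graphs_def by blast
  then show ?thesis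
    unfolding leaf_graphs_edge_between_leaves[OF V r x]
    by (simp add: sum_image_insert weight sum_distrib_left)
qed

lemma sum_leaf_edge_to_inner:
  fixes f :: "nat set \<Rightarrow> 'a::comm_semiring_1"
  assumes V: "finite V" "D \<subseteq> V" and r: "r \<in> D" and x: "x \<in> V - D"
  shows "(\<Sum>E \<in> {E \<in> leaf_graphs V D. {r,x} \<in> E}. comp_weight f V E)
       = (\<Sum>E \<in> leaf_graphs (V - {r}) (insert x (D - {r})). comp_weight (f \<circ> attach r x) (V - {r}) E)"
proof -
  have iso: "r \<notin> \<Union>E" if "E \<in> leaf_graphs (V - {r}) (insert x (D - {r}))" for E
    using that vertex_notin_degree_graph unfolding leaf_graphs_def by blast
  then have "{r,x} \<notin> E" if "E \<in> leaf_graphs (V - {r}) (insert x (D - {r}))" for E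
    using that by blast
  moreover have "comp_weight f V (insert {r,x} E) = comp_weight (f \<circ> attach r x) (V - {r}) E"
    if "E \<in> leaf_graphs (V - {r}) (insert x (D - {r}))" for E
    using iso[OF that] V r x by (intro comp_weight_insert_pendant) auto
  ultimately show ?thesis
    unfolding leaf_graphs_edge_to_inner[OF V r x] by (simp add: sum_image_insert)
qed

definition graph_sum :: "(nat \<Rightarrow> 'a::comm_semiring_1) \<Rightarrow> nat set \<Rightarrow> nat set \<Rightarrow> 'a" where
  "graph_sum h V D = (\<Sum>E \<in> leaf_graphs V D. comp_weight (h \<circ> card) V E)"

text \<open>In a rooted sum the component of the leaf r is weighted as if it had k more vertices:
  these stand for the vertices already removed from the path that ends at r.\<close>

definition root_weight :: "(nat \<Rightarrow> 'a) \<Rightarrow> nat \<Rightarrow> nat \<Rightarrow> nat set \<Rightarrow> 'a" where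
  "root_weight h r k C = h (card C + (if r \<in> C then k else 0))"

definition rooted_graph_sum :: "(nat \<Rightarrow> 'a::comm_semiring_1) \<Rightarrow> nat \<Rightarrow> nat \<Rightarrow> nat set \<Rightarrow> nat set \<Rightarrow> 'a"
  where "rooted_graph_sum h r k V D = (\<Sum>E \<in> leaf_graphs V D. comp_weight (root_weight h r k) V E)"

lemma rooted_graph_sum_0: "rooted_graph_sum h r 0 V D = graph_sum h V D"
proof -
  have "root_weight h r 0 = h \<circ> card"
    by (simp add: fun_eq_iff root_weight_def)
  then show ?thesis
    by (simp add: rooted_graph_sum_def graph_sum_def)
qed

text \<open>The edge at the leaf r goes either to another leaf x, and {r,x} is a path component
  containing k + 2 vertices of the original path, or to a vertex x of degree 2, which becomes
  the root of the smaller graph and carries one more vertex of that path.\<close>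

lemma rooted_graph_sum_rec:
  assumes V: "finite V" "D \<subseteq> V" and r: "r \<in> D"
  shows "rooted_graph_sum h r k V D
       = (\<Sum>x \<in> D - {r}. h (k + 2) * graph_sum h (V - {r,x}) (D - {r,x}))
         + (\<Sum>x \<in> V - D. rooted_graph_sum h x (Suc k) (V - {r}) (insert x (D - {r})))"
proof -
  let ?w = "comp_weight (root_weight h r k)"
  let ?S = "\<lambda>x. \<Sum>E \<in> {E \<in> leaf_graphs V D. {r,x} \<in> E}. ?w V E"
  have "rooted_graph_sum h r k V D = (\<Sum>x \<in> V - {r}. ?S x)"
    using sum_over_edges_at[OF V(1), where v = r and \<delta> = "\<lambda>v. if v \<in> D then 1 else 2" and w = "?w V"] V r
    by (auto simp: rooted_graph_sum_def leaf_graphs_def)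
  also have "\<dots> = (\<Sum>x \<in> D - {r}. ?S x) + (\<Sum>x \<in> V - D. ?S x)"
    using V r by (subst sum.union_disjoint[symmetric]) (auto intro: finite_subset sum.cong)
  also have "(\<Sum>x \<in> D - {r}. ?S x) = (\<Sum>x \<in> D - {r}. h (k + 2) * graph_sum h (V - {r,x}) (D - {r,x}))"
  proof (rule sum.cong[OF refl])
    fix x assume x: "x \<in> D - {r}"
    have "?w (V - {r,x}) E = comp_weight (h \<circ> card) (V - {r,x}) E" for E
      by (rule comp_weight_cong) (auto simp: root_weight_def)
    moreover have "root_weight h r k {r,x} = h (k + 2)"
      using x by (simp add: root_weight_def)
    ultimately show "?S x = h (k + 2) * graph_sum h (V - {r,x}) (D - {r,x})"
      using x sum_leaf_edge_between_leaves[OF V r, of x "root_weight h r k"]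
      by (simp add: graph_sum_def)
  qed
  also have "(\<Sum>x \<in> V - D. ?S x) = (\<Sum>x \<in> V - D. rooted_graph_sum h x (Suc k) (V - {r}) (insert x (D - {r})))"
  proof (rule sum.cong[OF refl])
    fix x assume x: "x \<in> V - D"
    have "comp_weight (root_weight h r k \<circ> attach r x) (V - {r}) E
        = comp_weight (root_weight h x (Suc k)) (V - {r}) E" for E
    proof (rule comp_weight_cong)
      fix C assume "C \<subseteq> V - {r}"
      then have "finite C" "r \<notin> C"
        using V(1) finite_subset by auto
      then show "(root_weight h r k \<circ> attach r x) C = root_weight h x (Suc k) C"
        by (simp add: root_weight_def attach_def)
    qed
    then show "?S x = rooted_graph_sum h x (Suc k) (V - {r}) (insert x (D - {r}))"
      using sum_leaf_edge_to_inner[OF V r x, of "root_weight h r k"] by (simp add: rooted_graph_sum_def)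
  qed
  finally show ?thesis .
qed

lemma sum_filter_split:
  "finite A \<Longrightarrow> sum f A = (\<Sum>a \<in> {a \<in> A. P a}. f a) + (\<Sum>a \<in> {a \<in> A. \<not> P a}. f a)"
  using sum.If_cases[of A P f f] by (simp add: Int_def)

text \<open>Each graph without leaves is counted once for each of the two neighbours x of v.
  Deleting the edge vx yields a graph with leaves v and x lying in one component, so the weight
  is unchanged; the graphs with leaves v and x that contain the edge vx itself do not arise.\<close>

lemma graph_sum_cycles_rec:
  fixes h :: "nat \<Rightarrow> 'a::comm_ring_1"
  assumes V: "finite V" "v \<in> V"
  shows "2 * graph_sum h V {}
       = (\<Sum>x \<in> V - {v}. graph_sum h V {v,x} - h 2 * graph_sum h (V - {v,x}) {})"
proof -
  let ?w = "comp_weight (h \<circ> card) V"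
  have "2 * graph_sum h V {} = (\<Sum>x \<in> V - {v}. \<Sum>E \<in> {E \<in> leaf_graphs V {}. {v,x} \<in> E}. ?w E)"
    using sum_over_edges_at[OF V, where \<delta> = "\<lambda>_. 2" and w = ?w]
    by (simp add: graph_sum_def leaf_graphs_def)
  also have "\<dots> = (\<Sum>x \<in> V - {v}. graph_sum h V {v,x} - h 2 * graph_sum h (V - {v,x}) {})"
  proof (rule sum.cong[OF refl])
    fix x assume "x \<in> V - {v}"
    then have x: "x \<in> V" "x \<noteq> v"
      by auto
    let ?G = "leaf_graphs V {v,x}"
    have "(\<Sum>E \<in> {E \<in> leaf_graphs V {}. {v,x} \<in> E}. ?w E)
        = (\<Sum>E \<in> {E \<in> ?G. {v,x} \<notin> E}. ?w (insert {v,x} E))"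
      unfolding cycle_graphs_edge[OF V x] by (intro sum_image_insert) auto
    also have "\<dots> = (\<Sum>E \<in> {E \<in> ?G. {v,x} \<notin> E}. ?w E)"
      using x V leaf_graphs_two_leaves_connected
      by (intro sum.cong refl comp_weight_insert_connected_edge) auto
    also have "\<dots> = graph_sum h V {v,x} - (\<Sum>E \<in> {E \<in> ?G. {v,x} \<in> E}. ?w E)"
      using sum_filter_split[OF finite_degree_graphs[OF V(1)], where f = ?w and P = "\<lambda>E. {v,x} \<in> E"]
      by (simp add: graph_sum_def leaf_graphs_def)
    also have "(\<Sum>E \<in> {E \<in> ?G. {v,x} \<in> E}. ?w E) = h 2 * graph_sum h (V - {v,x}) {}"
      using sum_leaf_edge_between_leaves[of V "{v,x}" v x "h \<circ> card"] V x
      by (simp add: graph_sum_def numeral_2_eq_2)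
    finally show "(\<Sum>E \<in> {E \<in> leaf_graphs V {}. {v,x} \<in> E}. ?w E)
        = graph_sum h V {v,x} - h 2 * graph_sum h (V - {v,x}) {}" .
  qed
  finally show ?thesis .
qed

lemma graph_sum_empty: "graph_sum h {} {} = 1"
proof -
  have "leaf_graphs {} {} = {{}}"
    by (auto simp: leaf_graphs_def degree_graphs_def)
  then show ?thesis
    by (simp add: graph_sum_def comp_weight_def components_on_def)
qed

text \<open>The path starting at a leaf runs through j of the n vertices of degree 2, taken in order,
  before ending in another leaf; the remaining graph then has n - j vertices of degree 2.\<close>

definition path_sum :: "(nat \<Rightarrow> 'a::field_char_0) \<Rightarrow> (nat \<Rightarrow> 'a) \<Rightarrow> nat \<Rightarrow> nat \<Rightarrow> 'a" where
  "path_sum h a k n = (\<Sum>j\<le>n. fact n / fact (n - j) * h (j + k + 2) * a (n - j))"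

lemma path_sum_rec:
  "path_sum h a k n = h (k + 2) * a n + of_nat n * path_sum h a (Suc k) (n - 1)"
proof (cases n)
  case (Suc m)
  have "path_sum h a k (Suc m)
      = h (k + 2) * a (Suc m) + (\<Sum>j\<le>m. fact (Suc m) / fact (m - j) * h (j + Suc k + 2) * a (m - j))"
    unfolding path_sum_def by (subst sum.atMost_Suc_shift) (simp del: fact_Suc)
  also have "(\<Sum>j\<le>m. fact (Suc m) / fact (m - j) * h (j + Suc k + 2) * a (m - j))
      = of_nat (Suc m) * path_sum h a (Suc k) m"
    unfolding path_sum_def sum_distrib_left by (intro sum.cong) (simp_all add: fact_Suc)
  finally show ?thesis
    using Suc by simp
qed (simp add: path_sum_def)

section \<open>The recurrences determine the weighted sums\<close>

text \<open>A d n stands for the weighted sum over the graphs with d leaves and n vertices of degree 2.\<close>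

locale graph_sum_recurrence =
  fixes h :: "nat \<Rightarrow> 'a::field_char_0" and A :: "nat \<Rightarrow> nat \<Rightarrow> 'a"
  assumes A_0_0: "A 0 0 = 1"
    and A_leaves: "1 \<le> d \<Longrightarrow> A d n = of_nat (d - 1) * path_sum h (A (d - 2)) 0 n"
    and A_cycles: "1 \<le> n \<Longrightarrow> 2 * A 0 n = of_nat ((n - 1) * (n - 2)) * path_sum h (A 0) 1 (n - 3)"
begin

lemma rooted_graph_sum_eq_step:
  assumes V: "finite V" "D \<subseteq> V" and r: "r \<in> D"
    and graph_IH: "\<And>V' D'. V' \<subset> V \<Longrightarrow> D' \<subseteq> V' \<Longrightarrow>
      graph_sum h V' D' = A (card D') (card (V' - D'))"
    and rooted_IH: "\<And>V' D' r' k'. V' \<subset> V \<Longrightarrow> D' \<subseteq> V' \<Longrightarrow> r' \<in> D' \<Longrightarrow>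
      rooted_graph_sum h r' k' V' D' = of_nat (card D' - 1) * path_sum h (A (card D' - 2)) k' (card (V' - D'))"
  shows "rooted_graph_sum h r k V D = of_nat (card D - 1) * path_sum h (A (card D - 2)) k (card (V - D))"
proof -
  have D: "finite D"
    using V finite_subset by blast
  have "graph_sum h (V - {r,x}) (D - {r,x}) = A (card D - 2) (card (V - D))" if x: "x \<in> D - {r}" for x
  proof -
    have "card (D - {r,x}) = card D - 2" "V - {r,x} - (D - {r,x}) = V - D"
      using D x r by (auto simp: card_Diff_subset)
    then show ?thesis
      using graph_IH[of "V - {r,x}" "D - {r,x}"] V x r by auto
  qed
  moreover have "rooted_graph_sum h x (Suc k) (V - {r}) (insert x (D - {r}))
      = of_nat (card D - 1) * path_sum h (A (card D - 2)) (Suc k) (card (V - D) - 1)" if x: "x \<in> V - D" for x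
  proof -
    have "card (insert x (D - {r})) = card D"
      using D x r by (metis Diff_iff card.remove card_insert_disjoint finite_Diff)
    moreover have "V - {r} - insert x (D - {r}) = V - D - {x}"
      using r by blast
    moreover have "card (V - D - {x}) = card (V - D) - 1"
      using V x by simp
    ultimately show ?thesis
      using rooted_IH[of "V - {r}" "insert x (D - {r})" x "Suc k"] V x r by auto
  qed
  ultimately have "rooted_graph_sum h r k V D
      = of_nat (card D - 1) * (h (k + 2) * A (card D - 2) (card (V - D)))
        + of_nat (card (V - D)) * (of_nat (card D - 1) * path_sum h (A (card D - 2)) (Suc k) (card (V - D) - 1))"
    using rooted_graph_sum_rec[OF V r, of h k] D r by simp
  also have "\<dots> = of_nat (card D - 1) * path_sum h (A (card D - 2)) k (card (V - D))"
    by (subst (2) path_sum_rec) (simp add: algebra_simps)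
  finally show ?thesis .
qed

lemma graph_sum_cycles_step:
  assumes V: "finite V" "v \<in> V"
    and leaf_pair: "\<And>x. x \<in> V - {v} \<Longrightarrow> graph_sum h V {v,x} = path_sum h (A 0) 0 (card V - 2)"
    and smaller: "\<And>x. x \<in> V - {v} \<Longrightarrow> graph_sum h (V - {v,x}) {} = A 0 (card V - 2)"
  shows "graph_sum h V {} = A 0 (card V)"
proof -
  let ?n = "card V"
  have "2 * graph_sum h V {} = of_nat (?n - 1) * (path_sum h (A 0) 0 (?n - 2) - h 2 * A 0 (?n - 2))"
    using graph_sum_cycles_rec[OF V, of h] leaf_pair smaller V by simp
  also have "\<dots> = of_nat ((?n - 1) * (?n - 2)) * path_sum h (A 0) 1 (?n - 3)"
  proof (cases "?n - 2")
    case (Suc m)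
    then have "?n - 3 = m"
      by simp
    with Suc show ?thesis
      using path_sum_rec[of h "A 0" 0 "?n - 2"] by (simp add: algebra_simps numeral_2_eq_2)
  qed (simp add: path_sum_def numeral_2_eq_2)
  also have "\<dots> = 2 * A 0 ?n"
    using A_cycles[of ?n] V card_gt_0_iff[of V] by force
  finally show ?thesis
    by simp
qed


lemma graph_sum_eq_step:
  assumes V: "finite V" "D \<subseteq> V"
    and rooted: "\<And>D' r. D' \<subseteq> V \<Longrightarrow> r \<in> D' \<Longrightarrow>
      rooted_graph_sum h r 0 V D' = of_nat (card D' - 1) * path_sum h (A (card D' - 2)) 0 (card (V - D'))"
    and graph_IH: "\<And>V'. V' \<subset> V \<Longrightarrow> graph_sum h V' {} = A 0 (card V')"
  shows "graph_sum h V D = A (card D) (card (V - D))"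
proof (cases "D = {}")
  case False
  then obtain r where r: "r \<in> D"
    by blast
  have "1 \<le> card D"
    using r V finite_subset[of D V] card_gt_0_iff[of D] by force
  have "graph_sum h V D = of_nat (card D - 1) * path_sum h (A (card D - 2)) 0 (card (V - D))"
    using rooted[OF V(2) r] by (simp add: rooted_graph_sum_0)
  also have "\<dots> = A (card D) (card (V - D))"
    by (rule A_leaves[symmetric]) fact
  finally show ?thesis .
next
  case True
  show ?thesis
  proof (cases "V = {}")
    case True
    with \<open>D = {}\<close> show ?thesis
      by (simp add: graph_sum_empty A_0_0)
  next
    case False
    then obtain v where v: "v \<in> V"
      by blast
    have "graph_sum h V {} = A 0 (card V)"
    proof (rule graph_sum_cycles_step[OF V(1) v])
      fix x assume x: "x \<in> V - {v}"
      then have "card {v,x} = 2" "card (V - {v,x}) = card V - 2"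
        using v V by (auto simp: card_Diff_subset)
      then show "graph_sum h V {v,x} = path_sum h (A 0) 0 (card V - 2)"
        using rooted[of "{v,x}" v] x v by (simp add: rooted_graph_sum_0)
    next
      fix x assume x: "x \<in> V - {v}"
      then have "card (V - {v,x}) = card V - 2"
        using v V by (auto simp: card_Diff_subset)
      then show "graph_sum h (V - {v,x}) {} = A 0 (card V - 2)"
        using graph_IH[of "V - {v,x}"] v by auto
    qed
    with \<open>D = {}\<close> show ?thesis
      by simp
  qed
qed

lemma rooted_graph_sum_and_graph_sum_eq:
  assumes "finite V"
  shows "(\<forall>D r k. D \<subseteq> V \<longrightarrow> r \<in> D \<longrightarrow>
           rooted_graph_sum h r k V D = of_nat (card D - 1) * path_sum h (A (card D - 2)) k (card (V - D)))
       \<and> (\<forall>D. D \<subseteq> V \<longrightarrow> graph_sum h V D = A (card D) (card (V - D)))"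
  using assms
proof (induction "card V" arbitrary: V rule: less_induct)
  case less
  have IH: "V' \<subset> V \<Longrightarrow> card V' < card V \<and> finite V'" for V'
    using less.prems by (auto intro: psubset_card_mono finite_subset)
  have rooted: "rooted_graph_sum h r k V D
      = of_nat (card D - 1) * path_sum h (A (card D - 2)) k (card (V - D))" if "D \<subseteq> V" "r \<in> D" for D r k
    using rooted_graph_sum_eq_step[OF less.prems that] less.hyps IH by blast
  have "graph_sum h V D = A (card D) (card (V - D))" if "D \<subseteq> V" for D
  proof (rule graph_sum_eq_step[OF less.prems that])
    show "graph_sum h V' {} = A 0 (card V')" if "V' \<subset> V" for V'
      using less.hyps[of V'] IH[OF that] by simp
  qed (fact rooted)
  with rooted show ?case
    by blast
qed

lemma graph_sum_eq: "finite V \<Longrightarrow> D \<subseteq> V \<Longrightarrow> graph_sum h V D = A (card D) (card (V - D))"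
  using rooted_graph_sum_and_graph_sum_eq by blast

end

section \<open>The coefficient formula\<close>

definition size_weight :: "nat \<Rightarrow> (nat \<Rightarrow> 'a::field_char_0) \<Rightarrow> nat \<Rightarrow> 'a" where
  "size_weight q u j = (if 2 \<le> j \<and> j \<le> q then u j else 1)"

lemma fps_nth_sum_monomials:
  "fps_nth (\<Sum>j\<in>S. fps_const (c j) * fps_X ^ g j) n = (\<Sum>j\<in>S. if n = g j then c j else 0)"
  by (simp add: fps_sum_nth) (rule sum.cong; simp)

lemma Path_fps_nth: "fps_nth (Path_fps q u) j = size_weight q u (j + 2)"
proof -
  have "(\<Sum>i\<in>{2..q}. if j = i - 2 then u i - 1 else 0) = (\<Sum>i\<in>{2..q}. if i = j + 2 then u i - 1 else 0)"
    by (rule sum.cong) auto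
  then show ?thesis
    by (simp add: Path_fps_def size_weight_def fps_nth_sum_monomials fps_inverse_one_minus_fps_X)
qed

lemma log_inv_one_minus_nth:
  "fps_nth (log_inv_one_minus :: 'a::field_char_0 fps) k = (if k = 0 then 0 else 1 / of_nat k)"
proof -
  have "(- 1 :: 'a) ^ k * (- 1) ^ (k - 1) = - 1" if "k > 0"
    using that by (cases k) auto
  then show ?thesis
    by (auto simp: log_inv_one_minus_def fps_compose_uminus' fps_ln_nth)
qed

lemma Cycle_fps_nth:
  "fps_nth (Cycle_fps q u) k = (if 3 \<le> k then size_weight q u k / (2 * of_nat k) else 0)"
proof -
  have "(\<Sum>j\<in>{3..q}. if k = j then (u j - 1) / (2 * of_nat j) else 0)
      = (\<Sum>j\<in>{3..q}. if j = k then (u j - 1) / (2 * of_nat j) else 0)"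
    by (rule sum.cong) auto
  then show ?thesis
    unfolding Cycle_fps_def
    by (simp add: fps_nth_sum_monomials log_inv_one_minus_nth fps_X_power_nth)
       (auto simp: size_weight_def field_simps numeral_2_eq_2)
qed

definition cycles_egf :: "nat \<Rightarrow> (nat \<Rightarrow> 'a::field_char_0) \<Rightarrow> 'a fps" where
  "cycles_egf q u = fps_exp 1 oo Cycle_fps q u"

lemma fps_deriv_cycles_egf: "fps_deriv (cycles_egf q u) = cycles_egf q u * fps_deriv (Cycle_fps q u)"
proof -
  have "fps_nth (Cycle_fps q u) 0 = 0"
    by (simp add: Cycle_fps_nth)
  then show ?thesis
    by (simp add: cycles_egf_def fps_compose_deriv fps_exp_deriv)
qed

lemma cycles_egf_rec:
  "2 * of_nat n * fps_nth (cycles_egf q u) n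
     = (\<Sum>i<n. fps_nth (cycles_egf q u) i * (if 3 \<le> n - i then size_weight q u (n - i) else 0))"
proof (cases n)
  case (Suc m)
  let ?H = "fps_nth (cycles_egf q u)"
  have deriv_Cycle: "fps_nth (fps_deriv (Cycle_fps q u)) j
      = (if 3 \<le> Suc j then size_weight q u (Suc j) else 0) / 2" for j
    by (simp add: fps_deriv_nth Cycle_fps_nth del: of_nat_Suc)
  have "of_nat (Suc m) * ?H (Suc m) = fps_nth (fps_deriv (cycles_egf q u)) m"
    by (simp add: fps_deriv_nth)
  also have "\<dots> = (\<Sum>i\<le>m. ?H i * fps_nth (fps_deriv (Cycle_fps q u)) (m - i))"
    by (simp add: fps_deriv_cycles_egf fps_mult_nth atLeast0AtMost)
  also have "\<dots> = (\<Sum>i<Suc m. ?H i * (if 3 \<le> Suc m - i then size_weight q u (Suc m - i) else 0) / 2)"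
    unfolding deriv_Cycle lessThan_Suc_atMost by (intro sum.cong) (auto simp: Suc_diff_le)
  finally have "of_nat (Suc m) * ?H (Suc m)
      = (\<Sum>i<Suc m. ?H i * (if 3 \<le> Suc m - i then size_weight q u (Suc m - i) else 0)) / 2"
    by (simp add: sum_divide_distrib)
  then show ?thesis
    unfolding Suc by (simp add: field_simps)
qed simp

definition matchings :: "nat \<Rightarrow> 'a::field_char_0" where
  "matchings d = fact d / (2 ^ (d div 2) * fact (d div 2))"

lemma matchings_Suc_Suc: "matchings (2 * m + 2) = of_nat (2 * m + 1) * (matchings (2 * m) :: 'a::field_char_0)"
proof -
  have num: "(fact (2 * m + 2) :: 'a) = (2 * of_nat (Suc m)) * (of_nat (2 * m + 1) * fact (2 * m))"
    by (simp add: fact_Suc algebra_simps numeral_2_eq_2)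
  have den: "(2::'a) ^ Suc m * fact (Suc m) = (2 * of_nat (Suc m)) * (2 ^ m * fact m)"
    by (simp add: algebra_simps)
  have half: "(2 * m + 2) div 2 = Suc m"
    by simp
  have "(matchings (2 * m + 2) :: 'a)
      = (2 * of_nat (Suc m)) * (of_nat (2 * m + 1) * fact (2 * m)) / ((2 * of_nat (Suc m)) * (2 ^ m * fact m))"
    by (simp only: matchings_def half num den)
  also have "\<dots> = of_nat (2 * m + 1) * fact (2 * m) / (2 ^ m * fact m)"
    by (rule mult_divide_mult_cancel_left) (simp add: of_nat_eq_0_iff del: of_nat_Suc)
  also have "\<dots> = of_nat (2 * m + 1) * matchings (2 * m)"
    by (simp add: matchings_def)
  finally show ?thesis .
qed

definition graph_sum_formula :: "nat \<Rightarrow> (nat \<Rightarrow> 'a::field_char_0) \<Rightarrow> nat \<Rightarrow> nat \<Rightarrow> 'a" where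
  "graph_sum_formula q u d n = (if even d
     then matchings d * fact n * fps_nth (cycles_egf q u * Path_fps q u ^ (d div 2)) n else 0)"

lemma graph_sum_formula_leaves:
  assumes "1 \<le> d"
  shows "graph_sum_formula q u d n
       = of_nat (d - 1) * path_sum (size_weight q u) (graph_sum_formula q u (d - 2)) 0 n"
proof (cases "even d")
  case False
  then have "d = 1 \<or> odd (d - 2)"
    using assms by presburger
  then show ?thesis
    using False by (auto simp: graph_sum_formula_def path_sum_def)
next
  case True
  then obtain k where k: "d = 2 * k"
    by (rule evenE)
  obtain m where m: "d = 2 * m + 2"
    using assms k by (intro that[of "k - 1"]) simp
  let ?P = "Path_fps q u" and ?G = "cycles_egf q u * Path_fps q u ^ m"
  have "path_sum (size_weight q u) (graph_sum_formula q u (d - 2)) 0 n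
      = (\<Sum>j\<le>n. matchings (2 * m) * fact n * (fps_nth ?P j * fps_nth ?G (n - j)))"
    unfolding path_sum_def
    by (intro sum.cong) (simp_all add: m graph_sum_formula_def Path_fps_nth field_simps)
  also have "\<dots> = matchings (2 * m) * fact n * fps_nth (?P * ?G) n"
    by (simp add: fps_mult_nth atLeast0AtMost sum_distrib_left)
  also have "?P * ?G = cycles_egf q u * Path_fps q u ^ (d div 2)"
    by (simp add: m algebra_simps)
  finally have "path_sum (size_weight q u) (graph_sum_formula q u (d - 2)) 0 n
      = matchings (2 * m) * fact n * fps_nth (cycles_egf q u * Path_fps q u ^ (d div 2)) n" .
  moreover have "graph_sum_formula q u d n
      = of_nat (2 * m + 1) * (matchings (2 * m) * fact n * fps_nth (cycles_egf q u * Path_fps q u ^ (d div 2)) n)"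
    using True unfolding graph_sum_formula_def m matchings_Suc_Suc by simp
  ultimately show ?thesis
    using m by simp
qed

lemma graph_sum_formula_cycles:
  assumes "1 \<le> n"
  shows "2 * graph_sum_formula q u 0 n
       = of_nat ((n - 1) * (n - 2)) * path_sum (size_weight q u) (graph_sum_formula q u 0) 1 (n - 3)"
proof -
  let ?H = "fps_nth (cycles_egf q u)"
  have formula_0: "graph_sum_formula q u 0 k = fact k * ?H k" for k
    by (simp add: graph_sum_formula_def matchings_def)
  show ?thesis
  proof (cases "n \<le> 2")
    case True
    then have "(\<Sum>i<n. ?H i * (if 3 \<le> n - i then size_weight q u (n - i) else 0)) = 0"
      by (intro sum.neutral) auto
    then have "2 * of_nat n * ?H n = 0"
      using cycles_egf_rec[of n q u] by simp
    with True assms show ?thesis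
      by (simp add: formula_0)
  next
    case False
    then obtain p where p: "n = p + 3"
      by (metis add.commute le_add_diff_inverse not_less_eq_eq numeral_2_eq_2 numeral_3_eq_3)
    have "2 * of_nat n * ?H n = (\<Sum>i\<le>p. ?H i * size_weight q u (n - i))"
      unfolding cycles_egf_rec by (rule sum.mono_neutral_cong_right) (use p in auto)
    also have "\<dots> = (\<Sum>j\<le>p. ?H (p - j) * size_weight q u (j + 3))"
      using sum.atLeastAtMost_rev[of "\<lambda>i. ?H i * size_weight q u (n - i)" 0 p] p
      by (simp add: atLeast0AtMost algebra_simps)
    finally have rec: "2 * of_nat n * ?H n = (\<Sum>j\<le>p. ?H (p - j) * size_weight q u (j + 3))" .
    have path: "path_sum (size_weight q u) (graph_sum_formula q u 0) 1 p
        = fact p * (\<Sum>j\<le>p. ?H (p - j) * size_weight q u (j + 3))"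
      unfolding path_sum_def formula_0 sum_distrib_left
      by (intro sum.cong) (simp_all add: field_simps numeral_3_eq_3)
    have "(fact n :: 'a) = of_nat n * (of_nat ((n - 1) * (n - 2)) * fact p)"
      unfolding p by (simp add: fact_Suc algebra_simps numeral_3_eq_3)
    then have "2 * graph_sum_formula q u 0 n = of_nat ((n - 1) * (n - 2)) * fact p * (2 * of_nat n * ?H n)"
      by (simp add: formula_0 algebra_simps)
    also have "\<dots> = of_nat ((n - 1) * (n - 2)) * path_sum (size_weight q u) (graph_sum_formula q u 0) 1 p"
      unfolding rec path by (simp add: algebra_simps)
    finally show ?thesis
      using p by simp
  qed
qed

lemma graph_sum_recurrence_formula: "graph_sum_recurrence (size_weight q u) (graph_sum_formula q u)"
proof unfold_locales
  show "graph_sum_formula q u 0 0 = 1"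
    by (simp add: graph_sum_formula_def matchings_def cycles_egf_def fps_compose_nth_0)
qed (fact graph_sum_formula_leaves graph_sum_formula_cycles)+

section \<open>The generating polynomial\<close>

lemma components_eq_components_on: "components n E = components_on {1..n} E"
  by (simp add: components_def components_on_def component_def)

lemma prod_comp_count:
  assumes "finite S"
  shows "(\<Prod>j\<in>{2..q}. u j ^ card {C\<in>S. card C = j}) = (\<Prod>C\<in>S. size_weight q u (card C))"
proof -
  have "(\<Prod>C\<in>S. size_weight q u (card C)) = (\<Prod>C\<in>S. \<Prod>j\<in>{2..q}. if card C = j then u j else 1)"
    by (rule prod.cong) (simp_all add: size_weight_def)
  also have "\<dots> = (\<Prod>j\<in>{2..q}. \<Prod>C\<in>S. if card C = j then u j else 1)"
    by (rule prod.swap)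
  also have "\<dots> = (\<Prod>j\<in>{2..q}. u j ^ card {C\<in>S. card C = j})"
    using assms by (simp add: prod.If_cases Int_def)
  finally show ?thesis ..
qed

lemma graphs12_with_leaves:
  assumes "D \<subseteq> {1..n1+n2}" "card D = n1"
  shows "{E \<in> graphs12 n1 n2. {v \<in> {1..n1+n2}. degree E v = 1} = D} = leaf_graphs {1..n1+n2} D"
proof (intro set_eqI iffI)
  fix E assume "E \<in> {E \<in> graphs12 n1 n2. {v \<in> {1..n1+n2}. degree E v = 1} = D}"
  then show "E \<in> leaf_graphs {1..n1+n2} D"
    by (auto simp: graphs12_def leaf_graphs_def degree_graphs_def simple_graph_def)
next
  fix E assume E: "E \<in> leaf_graphs {1..n1+n2} D"
  then have deg: "degree E v = (if v \<in> D then 1 else 2)" if "v \<in> {1..n1+n2}" for v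
    using that by (simp add: leaf_graphs_def degree_graphs_def)
  have "{v \<in> {1..n1+n2}. degree E v = 1} = D"
  proof (intro set_eqI iffI)
    fix v assume "v \<in> {v \<in> {1..n1+n2}. degree E v = 1}"
    then show "v \<in> D"
      using deg[of v] by (cases "v \<in> D") simp_all
  next
    fix v assume "v \<in> D"
    then show "v \<in> {v \<in> {1..n1+n2}. degree E v = 1}"
      using deg[of v] assms(1) by auto
  qed
  with E assms(2) show "E \<in> {E \<in> graphs12 n1 n2. {v \<in> {1..n1+n2}. degree E v = 1} = D}"
    by (auto simp: graphs12_def leaf_graphs_def degree_graphs_def simple_graph_def)
qed

lemma genpoly_eq_formula:
  fixes u :: "nat \<Rightarrow> 'a::field_char_0"
  shows "genpoly q u n1 n2 = of_nat ((n1 + n2) choose n1) * graph_sum_formula q u n1 n2"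
proof -
  let ?V = "{1..n1+n2}"
  let ?Ds = "{D. D \<subseteq> ?V \<and> card D = n1}"
  let ?leaves = "\<lambda>E. {v \<in> ?V. degree E v = 1}"
  let ?w = "\<lambda>E. \<Prod>j\<in>{2..q}. u j ^ comp_count (n1 + n2) E j"
  interpret graph_sum_recurrence "size_weight q u" "graph_sum_formula q u"
    by (rule graph_sum_recurrence_formula)
  have "finite (graphs12 n1 n2)"
    by (rule finite_subset[of _ "Pow (Pow ?V)"]) (auto simp: graphs12_def simple_graph_def)
  moreover have "?leaves ` graphs12 n1 n2 \<subseteq> ?Ds"
    by (auto simp: graphs12_def)
  ultimately have "genpoly q u n1 n2 = (\<Sum>D\<in>?Ds. \<Sum>E \<in> {E \<in> graphs12 n1 n2. ?leaves E = D}. ?w E)"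
    unfolding genpoly_def by (intro sum.group[symmetric]) simp_all
  also have "\<dots> = (\<Sum>D\<in>?Ds. graph_sum (size_weight q u) ?V D)"
  proof (rule sum.cong[OF refl])
    fix D assume "D \<in> ?Ds"
    then have "{E \<in> graphs12 n1 n2. ?leaves E = D} = leaf_graphs ?V D"
      by (intro graphs12_with_leaves) auto
    moreover have "?w E = comp_weight (size_weight q u \<circ> card) ?V E" for E
      unfolding comp_weight_def comp_count_def components_eq_components_on
      by (simp add: prod_comp_count components_on_def)
    ultimately show "(\<Sum>E \<in> {E \<in> graphs12 n1 n2. ?leaves E = D}. ?w E) = graph_sum (size_weight q u) ?V D"
      by (simp add: graph_sum_def)
  qed
  also have "\<dots> = (\<Sum>D\<in>?Ds. graph_sum_formula q u n1 n2)"
  proof (rule sum.cong[OF refl])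
    fix D assume D: "D \<in> ?Ds"
    then have "card (?V - D) = n2"
      using finite_subset[of D ?V] by (simp add: card_Diff_subset)
    with D show "graph_sum (size_weight q u) ?V D = graph_sum_formula q u n1 n2"
      by (simp add: graph_sum_eq)
  qed
  also have "\<dots> = of_nat ((n1 + n2) choose n1) * graph_sum_formula q u n1 n2"
    using n_subsets[of ?V n1] by simp
  finally show ?thesis .
qed

theorem lemma1:
  fixes q n1 n2 :: nat and u :: "nat \<Rightarrow> 'a::field_char_0"
  assumes "q \<ge> 2"
  shows "(odd n1 \<longrightarrow> genpoly q u n1 n2 = 0)
       \<and> (even n1 \<longrightarrow> genpoly q u n1 n2 =
            of_nat (fact (n1 + n2)) / (2 ^ (n1 div 2) * of_nat (fact (n1 div 2)))
            * fps_nth ((fps_exp 1 oo Cycle_fps q u) * Path_fps q u ^ (n1 div 2)) n2)"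
proof (intro conjI impI)
  assume "odd n1"
  then show "genpoly q u n1 n2 = 0"
    by (simp add: genpoly_eq_formula graph_sum_formula_def)
next
  assume "even n1"
  then show "genpoly q u n1 n2 =
      of_nat (fact (n1 + n2)) / (2 ^ (n1 div 2) * of_nat (fact (n1 div 2)))
      * fps_nth ((fps_exp 1 oo Cycle_fps q u) * Path_fps q u ^ (n1 div 2)) n2"
    by (simp add: genpoly_eq_formula graph_sum_formula_def matchings_def cycles_egf_def binomial_fact)
qed

end
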